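(* For real parameters $a,\epsilon$, let $Q_{a,\epsilon}$ be the region bounded by the segment from $(0,0)$ to $(1,0)$, the segment from $(0,0)$ to $(0,\tfrac12)$, the segment from $(1,0)$ to $(1,\tfrac12+a)$, and the curve $y(x)=\epsilon x^2+(a-\epsilon)x+\tfrac12$, $x\in[0,1]$. For $p,q$ near $\tfrac12$ and $\theta$ near $0$, let $\Gamma(p,q,\theta)$ be the circular arc of central angle $\theta$ joining $(q,0)$ and $(p,y(p))$, with radius $R=\frac{\sqrt{(q-p)^2+y(p)^2}}{2\sin(\theta/2)}$ (for $\theta=0$, the straight segment), and define $$A_{\mathrm{tot}}=\int_0^1 y(x)\,dx,\quad A_1=\int_0^p y(x)\,dx+\tfrac12 y(p)(q-p)+\tfrac12R^2\theta-\tfrac14\big[(q-p)^2+y(p)^2\big]\cot(\theta/2),\quad A_2=A_{\mathrm{tot}}-A_1,$$ (the left and right areas into which $\Gamma$ divides $Q_{a,\epsilon}$, with $\theta>0$ meaning the circular cap is added to the left region), and $$\mathrm{RC}(p,q,\theta;a,\epsilon)=\frac{R\,\theta}{A_1A_2}.$$ Then $\mathrm{RC}$ extends smoothly to a neighborhood of $(p,q,\theta;a,\epsilon)=(\tfrac12,\tfrac12,0;0,0)$; at $a=\epsilon=0$ the point $(p,q,\theta)=(\tfrac12,\tfrac12,0)$ is a nondegenerate local minimum with Hessian in the variables $(q,p,\theta)$ equal to $$\begin{pmatrix}48&-16&\tfrac43\\-16&48&\tfrac43\\ \tfrac43&\tfrac43&\tfrac79\end{pmatrix};$$ and for $\epsilon=0$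 and $a$ small, the critical point $(q,p,\theta)$ of $\mathrm{RC}(\cdot;a,0)$ near $(\tfrac12,\tfrac12,0)$ satisfies $$\Big(q-\tfrac12,\;p-\tfrac12,\;\theta\Big)=a\Big(\tfrac1{12},\;-\tfrac16,\;1\Big)+O(a^2).$$
   Context: $\mathrm{RC}$ is the Ratio Cut quotient $\mathcal H^1(\Gamma)/(|S|\,|Q\setminus S|)$ (length of the cut divided by the product of the two areas) restricted to circular-arc cuts parametrized by their endpoints $(q,0)$, $(p,y(p))$ and central angle $\theta$. *)

theory Defs
  imports "HOL-Analysis.Analysis"
begin

definition yfun :: "real \<Rightarrow> real \<Rightarrow> real \<Rightarrow> real" where
  "yfun a e x = e * x^2 + (a - e) * x + 1/2"

definition chord2 :: "real \<Rightarrow> real \<Rightarrow> real \<Rightarrow> real \<Rightarrow> real" where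
  "chord2 a e p q = (q - p)^2 + (yfun a e p)^2"

definition Rrad :: "real \<Rightarrow> real \<Rightarrow> real \<Rightarrow> real \<Rightarrow> real \<Rightarrow> real" where
  "Rrad a e p q \<theta> = sqrt (chord2 a e p q) / (2 * sin (\<theta> / 2))"

definition Atot :: "real \<Rightarrow> real \<Rightarrow> real" where
  "Atot a e = integral {0..1} (yfun a e)"

definition A1 :: "real \<Rightarrow> real \<Rightarrow> real \<Rightarrow> real \<Rightarrow> real \<Rightarrow> real" where
  "A1 a e p q \<theta> = integral {0..p} (yfun a e) + 1/2 * yfun a e p * (q - p)
     + 1/2 * (Rrad a e p q \<theta>)^2 * \<theta> - 1/4 * chord2 a e p q * cot (\<theta> / 2)"

definition A2 :: "real \<Rightarrow> real \<Rightarrow> real \<Rightarrow> real \<Rightarrow> real \<Rightarrow> real" where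
  "A2 a e p q \<theta> = Atot a e - A1 a e p q \<theta>"

text \<open>Ratio Cut quotient RC(p,q,theta;a,eps), literal formula (meaningful for theta \<noteq> 0).\<close>
definition RC :: "real \<Rightarrow> real \<Rightarrow> real \<Rightarrow> real \<Rightarrow> real \<Rightarrow> real" where
  "RC p q \<theta> a e = Rrad a e p q \<theta> * \<theta> / (A1 a e p q \<theta> * A2 a e p q \<theta>)"

fun Ck_on :: "nat \<Rightarrow> 'a::euclidean_space set \<Rightarrow> ('a \<Rightarrow> real) \<Rightarrow> bool" where
  "Ck_on 0 U f = continuous_on U f"
| "Ck_on (Suc k) U f = (f differentiable_on U \<and>
      (\<forall>b\<in>Basis. Ck_on k U (\<lambda>x. frechet_derivative f (at x) b)))"

definition smooth_on :: "'a::euclidean_space set \<Rightarrow> ('a \<Rightarrow> real) \<Rightarrow> bool" where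
  "smooth_on U f = (\<forall>k. Ck_on k U f)"

definition dd :: "('a::real_normed_vector \<Rightarrow> real) \<Rightarrow> 'a \<Rightarrow> 'a \<Rightarrow> real" where
  "dd f v x = frechet_derivative f (at x) v"

definition Hess3 :: "(real^3 \<Rightarrow> real) \<Rightarrow> real^3 \<Rightarrow> real^3^3" where
  "Hess3 G x = (\<chi> i j. dd (\<lambda>z. dd G (axis j 1) z) (axis i 1) x)"

definition pt5 :: "real \<Rightarrow> real \<Rightarrow> real \<Rightarrow> real \<Rightarrow> real \<Rightarrow> real^5" where
  "pt5 q p \<theta> a e = vector [q, p, \<theta>, a, e]"

definition emb5 :: "real^3 \<Rightarrow> real \<Rightarrow> real \<Rightarrow> real^5" where
  "emb5 z a e = pt5 (z$1) (z$2) (z$3) a e"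

definition base3 :: "real^3" where
  "base3 = vector [1/2, 1/2, 0]"

end

theory Submission
  imports Defs
begin

text \<open>The quotient is a composite of polynomials, square roots, reciprocals and entire power
  series in \<open>(q, p, \<theta>, a, \<epsilon>)\<close>: writing \<open>sin u = u S(u)\<close> and \<open>u - sin u = u\<^sup>3 T(u)\<close>,
  one has \<open>R \<theta> = sqrt c / S(\<theta>/2)\<close> and \<open>R\<^sup>2 \<theta> / 2 - c cot(\<theta>/2) / 4 = c (\<theta>/2) T(\<theta>) / S(\<theta>/2)\<^sup>2\<close>,
  where \<open>c\<close> is the squared chord. Such expressions have symbolic partial derivatives of every
  order, so the extension is smooth wherever its roots and reciprocals are defined, and its
  derivatives at \<open>(1/2, 1/2, 0; 0, 0)\<close> can be evaluated exactly. The Hessian there is positive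
  definite, so by continuity every slice with small \<open>a\<close> is uniformly strongly convex on a fixed
  ball: it has exactly one critical point, which for \<open>a = 0\<close> is the base point and a minimum.
  The distance of that critical point from \<open>base + a v\<close> is bounded by the gradient at
  \<open>base + a v\<close> divided by the convexity constant, and this gradient is \<open>O(a\<^sup>2)\<close> by Taylor's
  theorem because \<open>v\<close> solves the linearised critical-point equation.\<close>

section \<open>Expressions with symbolic partial derivatives\<close>

datatype 'n expr =
    EConst real | EVar 'n | EAdd "'n expr" "'n expr" | EMul "'n expr" "'n expr"
  | EInv "'n expr" | ESqrt "'n expr" | ESeries "nat \<Rightarrow> real" "'n expr"

definition power_series :: "(nat \<Rightarrow> real) \<Rightarrow> real \<Rightarrow> real" where
  "power_series c u = (\<Sum>n. c n * u ^ n)"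

primrec eval_expr :: "'n::finite expr \<Rightarrow> real^'n \<Rightarrow> real" where
  "eval_expr (EConst c) x = c"
| "eval_expr (EVar j) x = x $ j"
| "eval_expr (EAdd e f) x = eval_expr e x + eval_expr f x"
| "eval_expr (EMul e f) x = eval_expr e x * eval_expr f x"
| "eval_expr (EInv e) x = inverse (eval_expr e x)"
| "eval_expr (ESqrt e) x = sqrt (eval_expr e x)"
| "eval_expr (ESeries c e) x = power_series c (eval_expr e x)"

definition entire_coeffs :: "(nat \<Rightarrow> real) \<Rightarrow> bool" where
  "entire_coeffs c \<longleftrightarrow> (\<forall>y::real. summable (\<lambda>n. c n * y ^ n))"

primrec defined_at :: "'n::finite expr \<Rightarrow> real^'n \<Rightarrow> bool" where
  "defined_at (EConst c) x = True"
| "defined_at (EVar j) x = True"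
| "defined_at (EAdd e f) x = (defined_at e x \<and> defined_at f x)"
| "defined_at (EMul e f) x = (defined_at e x \<and> defined_at f x)"
| "defined_at (EInv e) x = (defined_at e x \<and> eval_expr e x \<noteq> 0)"
| "defined_at (ESqrt e) x = (defined_at e x \<and> eval_expr e x > 0)"
| "defined_at (ESeries c e) x = (defined_at e x \<and> entire_coeffs c)"

primrec partial_expr :: "'n::finite expr \<Rightarrow> 'n \<Rightarrow> 'n expr" where
  "partial_expr (EConst c) i = EConst 0"
| "partial_expr (EVar j) i = EConst (if j = i then 1 else 0)"
| "partial_expr (EAdd e f) i = EAdd (partial_expr e i) (partial_expr f i)"
| "partial_expr (EMul e f) i = EAdd (EMul (partial_expr e i) f) (EMul e (partial_expr f i))"
| "partial_expr (EInv e) i = EMul (EConst (-1)) (EMul (partial_expr e i) (EMul (EInv e) (EInv e)))"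
| "partial_expr (ESqrt e) i = EMul (partial_expr e i) (EInv (EMul (EConst 2) (ESqrt e)))"
| "partial_expr (ESeries c e) i = EMul (ESeries (diffs c) e) (partial_expr e i)"

definition expr_derivative :: "'n::finite expr \<Rightarrow> real^'n \<Rightarrow> real^'n \<Rightarrow> real" where
  "expr_derivative e x h = (\<Sum>i\<in>UNIV. h $ i * eval_expr (partial_expr e i) x)"

lemma entire_coeffs_diffs: "entire_coeffs c \<Longrightarrow> entire_coeffs (diffs c)"
  unfolding entire_coeffs_def using termdiff_converges_all by blast

lemma defined_at_partial: "defined_at e x \<Longrightarrow> defined_at (partial_expr e i) x"
  by (induction e) (auto simp: entire_coeffs_diffs)

lemma has_derivative_real_compose:
  assumes "(f has_derivative f') (at x)" "(g has_field_derivative D) (at (f x))"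
  shows "((\<lambda>y. g (f y)) has_derivative (\<lambda>h. D * f' h)) (at x)"
  using has_derivative_compose[OF assms(1) assms(2)[unfolded has_field_derivative_def]] by simp

lemma has_derivative_eval_expr:
  "defined_at e x \<Longrightarrow> (eval_expr e has_derivative expr_derivative e x) (at x)"
proof (induction e)
  case (EConst c)
  then show ?case by (auto simp: expr_derivative_def intro!: has_derivative_eq_rhs[OF has_derivative_const])
next
  case (EVar j)
  have "expr_derivative (EVar j) x h = h $ j" for h
  proof -
    have "expr_derivative (EVar j) x h = (\<Sum>i\<in>UNIV. if j = i then h $ i else 0)"
      unfolding expr_derivative_def by (rule sum.cong) auto
    then show ?thesis by simp
  qed
  moreover have "eval_expr (EVar j) = (\<lambda>y. y $ j)" by auto
  ultimately show ?case
    using bounded_linear_imp_has_derivative[OF bounded_linear_vec_nth[of j]] by (simp add: fun_eq_iff)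
next
  case (EAdd e f)
  then show ?case
    by (auto intro!: has_derivative_eq_rhs[OF has_derivative_add]
        simp: expr_derivative_def fun_eq_iff sum.distrib distrib_left)
next
  case (EMul e f)
  then show ?case
    by (auto intro!: has_derivative_eq_rhs[OF has_derivative_mult]
        simp: expr_derivative_def fun_eq_iff sum.distrib distrib_left sum_distrib_left
          sum_distrib_right mult_ac)
next
  case (EInv e)
  then have "((\<lambda>y. inverse (eval_expr e y)) has_derivative
      (\<lambda>h. - (inverse (eval_expr e x) ^ 2) * expr_derivative e x h)) (at x)"
    using has_derivative_real_compose[OF EInv.IH DERIV_inverse] EInv.prems by (simp add: power2_eq_square)
  then show ?case
    by (simp add: expr_derivative_def sum_distrib_left mult_ac power2_eq_square)
next
  case (ESqrt e)
  then have "((\<lambda>y. sqrt (eval_expr e y)) has_derivative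
      (\<lambda>h. (inverse (sqrt (eval_expr e x)) / 2) * expr_derivative e x h)) (at x)"
    using has_derivative_real_compose[OF ESqrt.IH DERIV_real_sqrt] ESqrt.prems by simp
  then show ?case
    by (simp add: expr_derivative_def sum_distrib_left mult_ac)
next
  case (ESeries c e)
  then have "((\<lambda>y. \<Sum>n. c n * eval_expr e y ^ n) has_derivative
      (\<lambda>h. (\<Sum>n. diffs c n * eval_expr e x ^ n) * expr_derivative e x h)) (at x)"
    by (intro has_derivative_real_compose termdiffs_strong_converges_everywhere)
      (auto simp: entire_coeffs_def)
  then show ?case
    by (simp add: expr_derivative_def power_series_def sum_distrib_left mult_ac)
qed

lemma isCont_eval_expr: "defined_at e x \<Longrightarrow> isCont (eval_expr e) x"
  using has_derivative_eval_expr has_derivative_continuous by blast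

lemma expr_derivative_axis: "expr_derivative e x (axis i 1) = eval_expr (partial_expr e i) x"
proof -
  have "expr_derivative e x (axis i 1) = (\<Sum>j\<in>UNIV. if i = j then eval_expr (partial_expr e j) x else 0)"
    unfolding expr_derivative_def by (rule sum.cong) (auto simp: axis_def)
  then show ?thesis by simp
qed

lemma eventually_defined_at: "defined_at e x \<Longrightarrow> eventually (defined_at e) (nhds x)"
proof (induction e)
  case (EInv e)
  then have "eventually (\<lambda>y. eval_expr e y \<noteq> 0) (nhds x)"
    using isCont_eval_expr by (intro tendsto_imp_eventually_ne) (auto simp: isCont_def tendsto_at_iff_tendsto_nhds)
  with EInv show ?case by (auto elim: eventually_elim2)
next
  case (ESqrt e)
  then have "eventually (\<lambda>y. 0 < eval_expr e y) (nhds x)"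
    using isCont_eval_expr by (intro order_tendstoD(1)) (auto simp: isCont_def tendsto_at_iff_tendsto_nhds)
  with ESqrt show ?case by (auto elim: eventually_elim2)
qed (auto elim: eventually_elim2 eventually_mono intro: always_eventually)

lemma open_defined_at: "open {x. defined_at e x}"
proof (subst open_subopen, intro ballI)
  fix x assume "x \<in> {x. defined_at e x}"
  then obtain S where "open S" "x \<in> S" "\<forall>y\<in>S. defined_at e y"
    using eventually_defined_at unfolding eventually_nhds by blast
  then show "\<exists>T. open T \<and> x \<in> T \<and> T \<subseteq> {x. defined_at e x}" by blast
qed

lemma Ck_on_eval_expr:
  assumes "open U" "\<forall>x\<in>U. defined_at e x" "\<forall>x\<in>U. f x = eval_expr e x"
  shows "Ck_on k U f"
  using assms(2,3)
proof (induction k arbitrary: e f)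
  case 0
  have "continuous_on U (eval_expr e)"
    using 0 isCont_eval_expr by (intro continuous_at_imp_continuous_on) auto
  then show ?case using 0 by (auto intro: continuous_on_eq)
next
  case (Suc k)
  have f': "(f has_derivative expr_derivative e x) (at x)" if "x \<in> U" for x
    using has_derivative_transform_within_open[OF has_derivative_eval_expr assms(1) that] Suc.prems that
    by auto
  then have "f differentiable_on U"
    by (auto simp: differentiable_on_def intro: differentiableI differentiable_at_withinI)
  moreover have "Ck_on k U (\<lambda>x. frechet_derivative f (at x) b)" if "b \<in> Basis" for b
  proof -
    from axis_inverse[OF that] obtain i where b: "b = axis i 1" by auto
    show ?thesis
    proof (rule Suc.IH)
      show "\<forall>x\<in>U. defined_at (partial_expr e i) x" using Suc.prems defined_at_partial by blast
      show "\<forall>x\<in>U. frechet_derivative f (at x) b = eval_expr (partial_expr e i) x"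
        using f' frechet_derivative_at b expr_derivative_axis by metis
    qed
  qed
  ultimately show ?case by simp
qed

lemma has_derivative_eval_expr_compose:
  assumes "defined_at e (g z)" "(g has_derivative g') (at z)"
  shows "((\<lambda>w. eval_expr e (g w)) has_derivative (\<lambda>h. expr_derivative e (g z) (g' h))) (at z)"
  using has_derivative_compose[OF assms(2) has_derivative_eval_expr[OF assms(1)]] .

lemma has_real_derivative_eval_expr_line:
  assumes "defined_at e (x + t *\<^sub>R v)"
  shows "((\<lambda>s. eval_expr e (x + s *\<^sub>R v)) has_real_derivative expr_derivative e (x + t *\<^sub>R v) v) (at t)"
proof -
  have "((\<lambda>s. x + s *\<^sub>R v) has_derivative (\<lambda>h. h *\<^sub>R v)) (at t)"
    by (auto intro!: derivative_eq_intros)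
  from has_derivative_eval_expr_compose[OF assms this]
  show ?thesis
    unfolding has_field_derivative_def
    by (rule has_derivative_eq_rhs) (auto simp: fun_eq_iff expr_derivative_def sum_distrib_left mult_ac)
qed

definition second_derivative_along :: "'n::finite expr \<Rightarrow> real^'n \<Rightarrow> real^'n \<Rightarrow> real" where
  "second_derivative_along e x v = (\<Sum>i\<in>UNIV. v $ i * expr_derivative (partial_expr e i) x v)"

lemma has_real_derivative_expr_derivative_line:
  assumes "defined_at e (x + t *\<^sub>R v)"
  shows "((\<lambda>s. expr_derivative e (x + s *\<^sub>R v) v) has_real_derivative
           second_derivative_along e (x + t *\<^sub>R v) v) (at t)"
  unfolding expr_derivative_def[of e] second_derivative_along_def
  using assms defined_at_partial
  by (intro DERIV_sum DERIV_cmult has_real_derivative_eval_expr_line) auto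

lemma isCont_second_derivative_along:
  "defined_at e x \<Longrightarrow> isCont (\<lambda>y. second_derivative_along e y v) x"
  unfolding second_derivative_along_def expr_derivative_def
  by (intro continuous_intros isCont_eval_expr defined_at_partial)

lemma eventually_dist_eval_expr_less:
  assumes "defined_at e x" "0 < \<epsilon>"
  shows "eventually (\<lambda>y. \<bar>eval_expr e y - eval_expr e x\<bar> < \<epsilon>) (nhds x)"
proof -
  have "(eval_expr e \<longlongrightarrow> eval_expr e x) (nhds x)"
    using isCont_eval_expr[OF assms(1)] by (simp add: isCont_def tendsto_at_iff_tendsto_nhds)
  from tendstoD[OF this assms(2)] show ?thesis by (simp add: dist_real_def)
qed

lemma taylor2_eval_expr_line:
  assumes along: "\<And>s. \<bar>s\<bar> \<le> \<bar>a\<bar> \<Longrightarrow>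
      defined_at e (x + s *\<^sub>R v) \<and> \<bar>second_derivative_along e (x + s *\<^sub>R v) v\<bar> \<le> K"
    and "eval_expr e x = 0" "expr_derivative e x v = 0"
  shows "\<bar>eval_expr e (x + a *\<^sub>R v)\<bar> \<le> K / 2 * a^2"
proof (cases "a = 0")
  case False
  define diff where "diff m = (if m = 0 then (\<lambda>s. eval_expr e (x + s *\<^sub>R v))
      else if m = 1 then (\<lambda>s. expr_derivative e (x + s *\<^sub>R v) v)
      else (\<lambda>s. second_derivative_along e (x + s *\<^sub>R v) v))" for m :: nat
  have "\<forall>m s. m < 2 \<and> - \<bar>a\<bar> \<le> s \<and> s \<le> \<bar>a\<bar> \<longrightarrow> DERIV (diff m) s :> diff (Suc m) s"
    using along
    by (auto simp: diff_def less_2_cases_iff abs_le_iff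
        intro: has_real_derivative_eval_expr_line has_real_derivative_expr_derivative_line)
  then have "\<exists>t. (if a < 0 then a < t \<and> t < 0 else 0 < t \<and> t < a) \<and>
      diff 0 a = (\<Sum>m<2. diff m 0 / fact m * (a - 0)^m) + diff 2 t / fact 2 * (a - 0)^2"
    using False by (intro Taylor[of 2 diff "diff 0" "- \<bar>a\<bar>" "\<bar>a\<bar>" 0 a]) auto
  then obtain t where "if a < 0 then a < t \<and> t < 0 else 0 < t \<and> t < a"
    and taylor: "diff 0 a = (\<Sum>m<2. diff m 0 / fact m * (a - 0)^m) + diff 2 t / fact 2 * (a - 0)^2"
    by blast
  then have t: "\<bar>t\<bar> \<le> \<bar>a\<bar>" by (auto split: if_splits)
  have "eval_expr e (x + a *\<^sub>R v) = second_derivative_along e (x + t *\<^sub>R v) v / 2 * a^2"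
    using taylor assms(2,3) by (simp add: diff_def eval_nat_numeral)
  then have "\<bar>eval_expr e (x + a *\<^sub>R v)\<bar> = \<bar>second_derivative_along e (x + t *\<^sub>R v) v / 2 * a^2\<bar>"
    by (simp only:)
  also have "\<dots> = \<bar>second_derivative_along e (x + t *\<^sub>R v) v\<bar> / 2 * a^2"
    by (simp add: abs_mult)
  also have "\<dots> \<le> K / 2 * a^2"
    using along[OF t] by (simp add: divide_right_mono mult_right_mono)
  finally show ?thesis .
qed (use assms(2) in simp)

text \<open>Value, two first partials and a mixed second partial, computed in one pass so that the
  large symbolic second derivative is never built.\<close>
primrec jet2 :: "'n::finite expr \<Rightarrow> real^'n \<Rightarrow> 'n \<Rightarrow> 'n \<Rightarrow> real \<times> real \<times> real \<times> real" where
  "jet2 (EConst c) x i j = (c, 0, 0, 0)"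
| "jet2 (EVar k) x i j = (x $ k, if k = i then 1 else 0, if k = j then 1 else 0, 0)"
| "jet2 (EAdd e f) x i j = (case jet2 e x i j of (u, ui, uj, uij) \<Rightarrow> case jet2 f x i j of (v, vi, vj, vij) \<Rightarrow>
     (u + v, ui + vi, uj + vj, uij + vij))"
| "jet2 (EMul e f) x i j = (case jet2 e x i j of (u, ui, uj, uij) \<Rightarrow> case jet2 f x i j of (v, vi, vj, vij) \<Rightarrow>
     (u * v, ui * v + u * vi, uj * v + u * vj, uij * v + ui * vj + uj * vi + u * vij))"
| "jet2 (EInv e) x i j = (case jet2 e x i j of (u, ui, uj, uij) \<Rightarrow>
     (inverse u, - ui / u^2, - uj / u^2, 2 * ui * uj / u^3 - uij / u^2))"
| "jet2 (ESqrt e) x i j = (case jet2 e x i j of (u, ui, uj, uij) \<Rightarrow>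
     (sqrt u, ui / (2 * sqrt u), uj / (2 * sqrt u), uij / (2 * sqrt u) - ui * uj / (4 * u * sqrt u)))"
| "jet2 (ESeries c e) x i j = (case jet2 e x i j of (u, ui, uj, uij) \<Rightarrow>
     (power_series c u, power_series (diffs c) u * ui, power_series (diffs c) u * uj,
      power_series (diffs (diffs c)) u * ui * uj + power_series (diffs c) u * uij))"

lemma jet2_eq:
  "defined_at e x \<Longrightarrow> jet2 e x i j =
     (eval_expr e x, eval_expr (partial_expr e i) x, eval_expr (partial_expr e j) x,
      eval_expr (partial_expr (partial_expr e j) i) x)"
proof (induction e)
  case (EInv e)
  then have "eval_expr e x \<noteq> 0" by simp
  with EInv show ?case by (simp add: field_simps power2_eq_square power3_eq_cube)
next
  case (ESqrt e)
  then have "eval_expr e x > 0" by simp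
  with ESqrt show ?case by (simp add: field_simps power2_eq_square)
qed (auto simp: algebra_simps)

lemma eval_partial_by_jet2:
  "defined_at e x \<Longrightarrow> eval_expr (partial_expr e i) x = fst (snd (jet2 e x i i))"
  by (simp add: jet2_eq)

lemma eval_partial_partial_by_jet2:
  "defined_at e x \<Longrightarrow> eval_expr (partial_expr (partial_expr e j) i) x = snd (snd (snd (jet2 e x i j)))"
  by (simp add: jet2_eq)

section \<open>Strongly convex functions on a ball\<close>

lemma add_scaleR_diff_in_ball:
  fixes z w c :: "'a::real_normed_vector"
  assumes "z \<in> ball c R" "w \<in> ball c R" "0 \<le> t" "t \<le> 1"
  shows "w + t *\<^sub>R (z - w) \<in> ball c R"
  using convexD_alt[OF convex_ball assms(2,1), of t] assms(3,4)
  by (simp add: algebra_simps)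

lemma quadratic_form_perturbation:
  fixes A B :: "real^'n^'n"
  assumes "\<And>i j. \<bar>A $ i $ j - B $ i $ j\<bar> \<le> \<epsilon>"
  shows "u \<bullet> (B *v u) - \<epsilon> * CARD('n) * (norm u)^2 \<le> u \<bullet> (A *v u)"
proof -
  have eps: "0 \<le> \<epsilon>" using assms[of undefined undefined] by linarith
  have "u \<bullet> (B *v u) - u \<bullet> (A *v u) = (\<Sum>i\<in>UNIV. \<Sum>j\<in>UNIV. u $ i * u $ j * (B $ i $ j - A $ i $ j))"
    by (simp add: inner_vec_def matrix_vector_mult_def sum_distrib_left algebra_simps
        flip: sum_subtractf)
  also have "\<dots> \<le> (\<Sum>i\<in>UNIV. \<Sum>j\<in>UNIV. \<bar>u $ i\<bar> * \<bar>u $ j\<bar> * \<epsilon>)"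
  proof (intro sum_mono)
    fix i j
    have "u $ i * u $ j * (B $ i $ j - A $ i $ j) \<le> \<bar>u $ i * u $ j\<bar> * \<bar>A $ i $ j - B $ i $ j\<bar>"
      by (metis abs_ge_self abs_minus_commute abs_mult)
    also have "\<dots> \<le> \<bar>u $ i\<bar> * \<bar>u $ j\<bar> * \<epsilon>"
      using assms by (simp add: abs_mult mult_left_mono)
    finally show "u $ i * u $ j * (B $ i $ j - A $ i $ j) \<le> \<bar>u $ i\<bar> * \<bar>u $ j\<bar> * \<epsilon>" .
  qed
  also have "\<dots> = \<epsilon> * (\<Sum>i\<in>UNIV. \<bar>u $ i\<bar>)^2"
    by (simp add: power2_eq_square sum_product sum_distrib_left mult_ac)
  also have "\<dots> \<le> \<epsilon> * ((\<Sum>i\<in>UNIV. (u $ i)^2) * CARD('n))"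
    using sum_squared_le_sum_of_squares[of "\<lambda>i. \<bar>u $ i\<bar>" UNIV] eps
    by (simp add: mult_left_mono)
  also have "(\<Sum>i\<in>UNIV. (u $ i)^2) = (norm u)^2"
    unfolding power2_norm_eq_inner by (simp add: inner_vec_def power2_eq_square)
  finally show ?thesis by (simp add: mult_ac)
qed

locale strongly_convex_on_ball =
  fixes G :: "'a::euclidean_space \<Rightarrow> real" and g :: "'a \<Rightarrow> 'a" and c :: 'a and R lam :: real
  assumes lam_pos: "lam > 0"
    and has_derivative_G: "\<And>z. z \<in> ball c R \<Longrightarrow> (G has_derivative (\<lambda>h. g z \<bullet> h)) (at z)"
    and second_derivative_ge: "\<And>z u t. z \<in> ball c R \<Longrightarrow> z + t *\<^sub>R u \<in> ball c R \<Longrightarrow>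
       \<exists>Q. ((\<lambda>s. g (z + s *\<^sub>R u) \<bullet> u) has_real_derivative Q) (at t) \<and> Q \<ge> lam * (norm u)^2"
begin

lemma gradient_strongly_monotone:
  assumes z: "z \<in> ball c R" and w: "w \<in> ball c R"
  shows "lam * (norm (z - w))^2 \<le> (g z - g w) \<bullet> (z - w)"
proof -
  define u where "u = z - w"
  define f where "f = (\<lambda>t. g (w + t *\<^sub>R u) \<bullet> u - lam * (norm u)^2 * t)"
  have "f 0 \<le> f 1"
  proof (rule DERIV_nonneg_imp_nondecreasing[of 0 1 f])
    fix t :: real assume t: "0 \<le> t" "t \<le> 1"
    obtain Q where Q: "((\<lambda>s. g (w + s *\<^sub>R u) \<bullet> u) has_real_derivative Q) (at t)"
      "Q \<ge> lam * (norm u)^2"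
      using second_derivative_ge[OF w] add_scaleR_diff_in_ball[OF z w t] unfolding u_def by blast
    have "(f has_real_derivative (Q - lam * (norm u)^2)) (at t)"
      unfolding f_def by (auto intro!: derivative_eq_intros Q(1))
    then show "\<exists>y. (f has_real_derivative y) (at t) \<and> 0 \<le> y" using Q(2) by auto
  qed simp
  then show ?thesis unfolding f_def u_def by (simp add: inner_diff_left)
qed

lemma quadratic_lower_bound:
  assumes z: "z \<in> ball c R" and w: "w \<in> ball c R"
  shows "G w + g w \<bullet> (z - w) + lam / 2 * (norm (z - w))^2 \<le> G z"
proof -
  define v where "v = z - w"
  define f where "f = (\<lambda>t. G (w + t *\<^sub>R v) - t * (g w \<bullet> v) - lam / 2 * (norm v)^2 * t^2)"
  have "f 0 \<le> f 1"
  proof (rule DERIV_nonneg_imp_nondecreasing[of 0 1 f])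
    fix t :: real assume t: "0 \<le> t" "t \<le> 1"
    have wt: "w + t *\<^sub>R v \<in> ball c R" unfolding v_def by (rule add_scaleR_diff_in_ball[OF z w t])
    have "((\<lambda>s. w + s *\<^sub>R v) has_derivative (\<lambda>h. h *\<^sub>R v)) (at t)"
      by (auto intro!: derivative_eq_intros)
    from has_derivative_compose[OF this has_derivative_G[OF wt]]
    have "((\<lambda>s. G (w + s *\<^sub>R v)) has_real_derivative (g (w + t *\<^sub>R v) \<bullet> v)) (at t)"
      unfolding has_field_derivative_def by (rule has_derivative_eq_rhs) (auto simp: fun_eq_iff)
    then have "(f has_real_derivative (g (w + t *\<^sub>R v) \<bullet> v - g w \<bullet> v - lam * (norm v)^2 * t)) (at t)"
      unfolding f_def by (auto intro!: derivative_eq_intros)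
    moreover have "lam * (norm v)^2 * t \<le> (g (w + t *\<^sub>R v) - g w) \<bullet> v"
    proof (cases "t = 0")
      case False
      have "lam * (norm (t *\<^sub>R v))^2 \<le> (g (w + t *\<^sub>R v) - g w) \<bullet> (t *\<^sub>R v)"
        using gradient_strongly_monotone[OF wt w] by simp
      then have "t * (lam * (norm v)^2 * t) \<le> t * ((g (w + t *\<^sub>R v) - g w) \<bullet> v)"
        by (simp add: power_mult_distrib power2_eq_square mult_ac)
      then show ?thesis using False t by simp
    qed simp
    ultimately show "\<exists>y. (f has_real_derivative y) (at t) \<and> 0 \<le> y"
      by (auto simp: inner_diff_left)
  qed simp
  then show ?thesis unfolding f_def v_def by (simp add: algebra_simps)
qed

lemma critical_point_unique:
  assumes "z \<in> ball c R" "w \<in> ball c R" "g z = 0" "g w = 0"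
  shows "z = w"
  using gradient_strongly_monotone[OF assms(1,2)] assms(3,4) lam_pos
  by (simp add: mult_le_0_iff)

lemma critical_point_dist_le:
  assumes "z \<in> ball c R" "w \<in> ball c R" "g z = 0"
  shows "lam * norm (z - w) \<le> norm (g w)"
proof -
  have "norm (z - w) * (lam * norm (z - w)) \<le> (g z - g w) \<bullet> (z - w)"
    using gradient_strongly_monotone[OF assms(1,2)] by (simp add: power2_eq_square mult_ac)
  also have "\<dots> \<le> norm (z - w) * norm (g w)"
    using assms(3) Cauchy_Schwarz_ineq2[of "g w" "z - w"] by (simp add: mult.commute)
  finally show ?thesis
    by (cases "z = w") (auto simp: mult_le_cancel_left lam_pos)
qed

text \<open>The minimum of \<open>G\<close> on the closed ball of radius \<open>r\<close> is interior: on the boundary the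
  quadratic lower bound exceeds \<open>G c\<close>.\<close>
lemma critical_point_exists:
  assumes r: "0 < r" "r < R" and small: "norm (g c) * r < lam / 2 * r^2"
  shows "\<exists>z\<in>ball c r. g z = 0"
proof -
  have cball_sub: "cball c r \<subseteq> ball c R" using r by auto
  have "continuous_on (cball c r) G"
    using has_derivative_G cball_sub has_derivative_continuous
    by (intro continuous_at_imp_continuous_on) blast
  then obtain z where z: "z \<in> cball c r" and z_min: "\<forall>y\<in>cball c r. G z \<le> G y"
    using continuous_attains_inf[OF compact_cball] r by (metis cball_eq_empty not_le order_less_imp_le)
  have "z \<in> ball c r"
  proof (rule ccontr)
    assume "z \<notin> ball c r"
    then have dz: "norm (z - c) = r" using z by (simp add: dist_norm norm_minus_commute)
    have "- (norm (g c) * r) \<le> g c \<bullet> (z - c)"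
      using Cauchy_Schwarz_ineq2[of "g c" "z - c"] dz by simp
    then have "G c < G z"
      using quadratic_lower_bound[of z c] cball_sub z r small dz by auto
    moreover have "G z \<le> G c" using z_min r by simp
    ultimately show False by simp
  qed
  moreover have "(\<lambda>h. g z \<bullet> h) = (\<lambda>h. 0)"
    using z_min r \<open>z \<in> ball c r\<close>
    by (intro differential_zero_maxmin[OF _ open_ball has_derivative_G]) auto
  then have "g z \<bullet> g z = 0" by metis
  ultimately show ?thesis by auto
qed

end

section \<open>Power series for the circular cap\<close>

lemma entire_coeffs_shift:
  assumes "entire_coeffs c" shows "entire_coeffs (\<lambda>n. c (Suc n))"
  unfolding entire_coeffs_def
proof
  fix y :: real
  show "summable (\<lambda>n. c (Suc n) * y ^ n)"
  proof (cases "y = 0")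
    case True
    have "summable (\<lambda>n. if n = 0 then c (Suc 0) else (0::real))"
      by (rule summable_finite[of "{0}"]) auto
    then show ?thesis using True by (simp add: power_0_left if_distrib cong: if_cong)
  next
    case False
    have "summable (\<lambda>n. c (Suc n) * y ^ Suc n)"
      using assms unfolding entire_coeffs_def by (subst summable_Suc_iff) blast
    then have "summable (\<lambda>n. c (Suc n) * y ^ Suc n / y)" by (rule summable_divide)
    then show ?thesis using False by simp
  qed
qed

lemma entire_coeffs_sin_coeff: "entire_coeffs sin_coeff"
  unfolding entire_coeffs_def
proof
  fix y :: real
  have "(\<lambda>n. sin_coeff n * y ^ n) sums sin y" using sin_converges[of y] by simp
  then show "summable (\<lambda>n. sin_coeff n * y ^ n)" by (rule sums_summable)
qed

lemma power_series_split_head: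
  assumes "entire_coeffs c"
  shows "power_series c u = c 0 + u * power_series (\<lambda>n. c (Suc n)) u"
proof -
  have "summable (\<lambda>n. c n * u ^ n)" "summable (\<lambda>n. c (Suc n) * u ^ n)"
    using assms entire_coeffs_shift[OF assms] unfolding entire_coeffs_def by blast+
  then have "(\<Sum>n. c (Suc n) * u ^ Suc n) = u * (\<Sum>n. c (Suc n) * u ^ n)"
    by (simp add: suminf_mult[symmetric] mult_ac)
  with suminf_split_head[OF \<open>summable (\<lambda>n. c n * u ^ n)\<close>] show ?thesis
    unfolding power_series_def by simp
qed

definition sinc_coeff :: "nat \<Rightarrow> real" where
  "sinc_coeff n = sin_coeff (Suc n)"

text \<open>The coefficients of \<open>(u - sin u) / u\<^sup>3\<close>.\<close>
definition sin_rem_coeff :: "nat \<Rightarrow> real" where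
  "sin_rem_coeff n = - sin_coeff (Suc (Suc (Suc n)))"

lemma entire_coeffs_sinc_coeff: "entire_coeffs sinc_coeff"
  unfolding sinc_coeff_def using entire_coeffs_shift[OF entire_coeffs_sin_coeff] by simp

lemma entire_coeffs_sin_rem_coeff: "entire_coeffs sin_rem_coeff"
  using entire_coeffs_shift[OF entire_coeffs_shift[OF entire_coeffs_sinc_coeff]]
  unfolding entire_coeffs_def sin_rem_coeff_def sinc_coeff_def by (auto dest: summable_minus)

lemma sin_eq_mult_power_series: "sin u = u * power_series sinc_coeff u"
proof -
  have "sin u = power_series sin_coeff u"
    using sin_converges[of u] unfolding power_series_def by (simp add: sums_iff)
  then show ?thesis
    using power_series_split_head[OF entire_coeffs_sin_coeff]
    by (simp add: sinc_coeff_def[abs_def] sin_coeff_def)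
qed

lemma power_series_sinc_coeff: "power_series sinc_coeff u = 1 - u^2 * power_series sin_rem_coeff u"
proof -
  have "power_series sinc_coeff u
      = sinc_coeff 0 + u * (sinc_coeff 1 + u * power_series (\<lambda>n. sinc_coeff (Suc (Suc n))) u)"
    using power_series_split_head[OF entire_coeffs_sinc_coeff, of u]
      power_series_split_head[OF entire_coeffs_shift[OF entire_coeffs_sinc_coeff], of u] by simp
  moreover have "power_series (\<lambda>n. sinc_coeff (Suc (Suc n))) u = - power_series sin_rem_coeff u"
    using entire_coeffs_shift[OF entire_coeffs_shift[OF entire_coeffs_sinc_coeff]]
    unfolding power_series_def entire_coeffs_def sinc_coeff_def sin_rem_coeff_def
    by (simp add: suminf_minus)
  ultimately show ?thesis
    by (simp add: sinc_coeff_def sin_coeff_def power2_eq_square algebra_simps)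
qed

text \<open>The right-hand side is analytic at \<open>t = 0\<close>; this removes the apparent singularity of
  the cap area.\<close>
lemma circular_segment_area:
  assumes c: "0 \<le> c" and t: "t \<noteq> 0" and S: "power_series sinc_coeff (t/2) \<noteq> 0"
  shows "1/2 * (sqrt c / (2 * sin (t/2)))^2 * t - 1/4 * c * cot (t/2)
       = c * (t/2) * power_series sin_rem_coeff t / (power_series sinc_coeff (t/2))^2"
proof -
  define s where "s = t/2"
  define S where "S = power_series sinc_coeff s"
  define T where "T = power_series sin_rem_coeff t"
  have ts: "t = 2 * s" and s0: "s \<noteq> 0" and S0: "S \<noteq> 0"
    using t S by (simp_all add: s_def S_def)
  have sin_s: "sin s = s * S" by (simp add: S_def sin_eq_mult_power_series)
  have "sin s * cos s = sin t / 2" using sin_double[of s] ts by simp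
  also have "sin t = t * (1 - t^2 * T)"
    using sin_eq_mult_power_series[of t] power_series_sinc_coeff[of t] by (simp add: T_def)
  finally have "s * S * cos s = s * (1 - 4 * s^2 * T)"
    unfolding sin_s ts by (simp add: algebra_simps power2_eq_square)
  then have "S * cos s = 1 - 4 * s^2 * T"
    using s0 by (simp add: mult.assoc)
  then have cos_s: "cos s = (1 - 4 * s^2 * T) / S"
    using S0 by (simp add: field_simps)
  have "1/2 * (sqrt c / (2 * sin s))^2 * t - 1/4 * c * cot s = c * s * T / S^2"
    unfolding cot_def cos_s sin_s power_divide real_sqrt_pow2[OF c] ts
    using s0 S0 by (simp add: field_simps power2_eq_square)
  then show ?thesis by (simp add: s_def S_def T_def)
qed

section \<open>The Ratio Cut quotient as an expression\<close>

lemma exhaust_5: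
  fixes x :: 5
  shows "x = 1 \<or> x = 2 \<or> x = 3 \<or> x = 4 \<or> x = 5"
proof (induct x)
  case (of_int z)
  then have "z = 0 \<or> z = 1 \<or> z = 2 \<or> z = 3 \<or> z = 4" by fastforce
  then show ?case by auto
qed

lemma forall_5: "(\<forall>i::5. P i) \<longleftrightarrow> P 1 \<and> P 2 \<and> P 3 \<and> P 4 \<and> P 5"
  by (metis exhaust_5)

lemma sum_5: "sum f (UNIV::5 set) = f 1 + f 2 + f 3 + f 4 + f 5"
proof -
  have "UNIV = {1, 2, 3, 4, 5::5}" using exhaust_5 by auto
  then show ?thesis unfolding \<open>UNIV = _\<close> by (simp add: ac_simps)
qed

lemma pt5_nth [simp]:
  "pt5 q p t a e $ 1 = q" "pt5 q p t a e $ 2 = p" "pt5 q p t a e $ 3 = t"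
  "pt5 q p t a e $ 4 = a" "pt5 q p t a e $ 5 = e"
  unfolding pt5_def vector_def by simp_all

lemma emb5_nth [simp]:
  "emb5 z a e $ 1 = z $ 1" "emb5 z a e $ 2 = z $ 2" "emb5 z a e $ 3 = z $ 3"
  "emb5 z a e $ 4 = a" "emb5 z a e $ 5 = e"
  by (simp_all add: emb5_def)

lemma vec_eq_iff_5: "x = y \<longleftrightarrow> (\<forall>i::5. x $ i = y $ i)"
  by (simp add: vec_eq_iff)

lemma emb5_add_scaleR:
  "emb5 (z + t *\<^sub>R u) (a + t * b) (e + t * c) = emb5 z a e + t *\<^sub>R emb5 u b c"
  by (simp add: vec_eq_iff_5 forall_5)

lemma emb5_diff: "emb5 z a e - emb5 z' a' e' = emb5 (z - z') (a - a') (e - e')"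
  by (simp add: vec_eq_iff_5 forall_5)

lemma has_derivative_emb5: "((\<lambda>w. emb5 w a e) has_derivative (\<lambda>h. emb5 h 0 0)) (at z)"
proof -
  have "linear (\<lambda>h. emb5 h 0 0)"
    by (rule linearI) (simp_all add: vec_eq_iff_5 forall_5)
  then have "((\<lambda>w. emb5 w 0 0 + emb5 0 a e) has_derivative (\<lambda>h. emb5 h 0 0)) (at z)"
    by (auto intro!: derivative_eq_intros simp: linear_conv_bounded_linear bounded_linear_imp_has_derivative)
  moreover have "emb5 w 0 0 + emb5 0 a e = emb5 w a e" for w
    by (simp add: vec_eq_iff_5 forall_5)
  ultimately show ?thesis by simp
qed

lemma norm_emb5_le: "norm (emb5 z a e) \<le> 3 * norm z + \<bar>a\<bar> + \<bar>e\<bar>"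
proof -
  have "norm (emb5 z a e) \<le> (\<Sum>i\<in>UNIV. \<bar>emb5 z a e $ i\<bar>)" by (rule norm_le_l1_cart)
  also have "\<dots> = \<bar>z $ 1\<bar> + \<bar>z $ 2\<bar> + \<bar>z $ 3\<bar> + \<bar>a\<bar> + \<bar>e\<bar>" by (simp add: sum_5)
  also have "\<dots> \<le> 3 * norm z + \<bar>a\<bar> + \<bar>e\<bar>"
    using component_le_norm_cart[of z 1] component_le_norm_cart[of z 2]
      component_le_norm_cart[of z 3] by linarith
  finally show ?thesis .
qed

definition ESub :: "'n expr \<Rightarrow> 'n expr \<Rightarrow> 'n expr" where
  "ESub e f = EAdd e (EMul (EConst (-1)) f)"

lemma eval_expr_ESub [simp]: "eval_expr (ESub e f) x = eval_expr e x - eval_expr f x"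
  by (simp add: ESub_def)

lemma defined_at_ESub [simp]: "defined_at (ESub e f) x \<longleftrightarrow> defined_at e x \<and> defined_at f x"
  by (simp add: ESub_def)

text \<open>Variables \<open>1, \<dots>, 5\<close> stand for \<open>q, p, \<theta>, a, \<epsilon>\<close>.\<close>
definition y_expr :: "5 expr" where
  "y_expr = EAdd (EMul (EVar 5) (EMul (EVar 2) (EVar 2)))
                 (EAdd (EMul (ESub (EVar 4) (EVar 5)) (EVar 2)) (EConst (1/2)))"

definition chord2_expr :: "5 expr" where
  "chord2_expr = EAdd (EMul (ESub (EVar 1) (EVar 2)) (ESub (EVar 1) (EVar 2))) (EMul y_expr y_expr)"

definition integral_y_expr :: "5 expr" where
  "integral_y_expr =
     EAdd (EMul (EMul (EConst (1/3)) (EVar 5)) (EMul (EVar 2) (EMul (EVar 2) (EVar 2))))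
       (EAdd (EMul (EMul (EConst (1/2)) (ESub (EVar 4) (EVar 5))) (EMul (EVar 2) (EVar 2)))
             (EMul (EConst (1/2)) (EVar 2)))"

definition Atot_expr :: "5 expr" where
  "Atot_expr = EAdd (EMul (EConst (1/3)) (EVar 5))
                    (EAdd (EMul (EConst (1/2)) (ESub (EVar 4) (EVar 5))) (EConst (1/2)))"

definition sinc_half_expr :: "5 expr" where
  "sinc_half_expr = ESeries sinc_coeff (EMul (EConst (1/2)) (EVar 3))"

definition A1_expr :: "5 expr" where
  "A1_expr = EAdd integral_y_expr
     (EAdd (EMul (EMul (EConst (1/2)) y_expr) (ESub (EVar 1) (EVar 2)))
       (EMul chord2_expr (EMul (EMul (EConst (1/2)) (EVar 3))
          (EMul (ESeries sin_rem_coeff (EVar 3)) (EMul (EInv sinc_half_expr) (EInv sinc_half_expr))))))"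

text \<open>Since \<open>R \<theta> = sqrt c / S(\<theta>/2)\<close>, the quotient has no singularity at \<open>\<theta> = 0\<close>.\<close>
definition RC_expr :: "5 expr" where
  "RC_expr = EMul (EMul (ESqrt chord2_expr) (EInv sinc_half_expr))
                  (EMul (EInv A1_expr) (EInv (ESub Atot_expr A1_expr)))"

lemma integral_yfun:
  assumes "0 \<le> p"
  shows "integral {0..p} (yfun a e) = e * p^3 / 3 + (a - e) * p^2 / 2 + p / 2"
proof -
  have "(yfun a e has_integral ((\<lambda>x. e * x^3 / 3 + (a - e) * x^2 / 2 + x / 2) p
          - (\<lambda>x. e * x^3 / 3 + (a - e) * x^2 / 2 + x / 2) 0)) {0..p}"
    by (rule fundamental_theorem_of_calculus[OF assms])
      (auto simp: has_real_derivative_iff_has_vector_derivative[symmetric] yfun_def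
        intro!: derivative_eq_intros simp: power2_eq_square field_simps)
  then show ?thesis by (simp add: integral_unique)
qed

lemma eval_y_expr: "eval_expr y_expr (pt5 q p t a e) = yfun a e p"
  by (simp add: y_expr_def yfun_def power2_eq_square)

lemma eval_chord2_expr: "eval_expr chord2_expr (pt5 q p t a e) = chord2 a e p q"
  by (simp add: chord2_expr_def eval_y_expr chord2_def power2_eq_square)

lemma eval_integral_y_expr:
  "0 \<le> p \<Longrightarrow> eval_expr integral_y_expr (pt5 q p t a e) = integral {0..p} (yfun a e)"
  by (simp add: integral_y_expr_def integral_yfun power2_eq_square power3_eq_cube field_simps)

lemma eval_A1_expr:
  assumes "0 \<le> p" "t \<noteq> 0" "power_series sinc_coeff (t/2) \<noteq> 0"
  shows "eval_expr A1_expr (pt5 q p t a e) = A1 a e p q t"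
proof -
  define S where "S = power_series sinc_coeff (t/2)"
  define T where "T = power_series sin_rem_coeff t"
  have "eval_expr A1_expr (pt5 q p t a e) = integral {0..p} (yfun a e) + (1/2 * yfun a e p * (q - p)
      + chord2 a e p q * (1/2 * t) * (T * (inverse S * inverse S)))"
    by (simp add: A1_expr_def eval_integral_y_expr[OF assms(1)] eval_y_expr eval_chord2_expr
        sinc_half_expr_def S_def T_def)
  also have "chord2 a e p q * (1/2 * t) * (T * (inverse S * inverse S)) = chord2 a e p q * (t/2) * T / S^2"
    by (simp add: power2_eq_square field_simps)
  also have "\<dots> = 1/2 * (Rrad a e p q t)^2 * t - 1/4 * chord2 a e p q * cot (t/2)"
    unfolding Rrad_def S_def T_def
    by (rule circular_segment_area[symmetric, OF _ assms(2,3)]) (simp add: chord2_def)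
  finally show ?thesis
    unfolding A1_def by simp
qed

lemma eval_RC_expr:
  assumes "defined_at RC_expr (pt5 q p t a e)" "0 \<le> p" "t \<noteq> 0"
  shows "eval_expr RC_expr (pt5 q p t a e) = RC p q t a e"
proof -
  define S where "S = power_series sinc_coeff (t/2)"
  have S0: "S \<noteq> 0"
    using assms(1) by (simp add: RC_expr_def sinc_half_expr_def S_def)
  have "Rrad a e p q t * t = sqrt (chord2 a e p q) * inverse S"
    unfolding Rrad_def sin_eq_mult_power_series[of "t/2"] S_def[symmetric]
    using assms(3) S0 by (simp add: field_simps)
  moreover have "eval_expr Atot_expr (pt5 q p t a e) = Atot a e"
    unfolding Atot_def by (simp add: Atot_expr_def integral_yfun field_simps)
  moreover have "eval_expr A1_expr (pt5 q p t a e) = A1 a e p q t"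
    using eval_A1_expr[OF assms(2,3) S0[unfolded S_def]] .
  moreover have "eval_expr RC_expr (pt5 q p t a e) = sqrt (chord2 a e p q) * inverse S
      * (inverse (eval_expr A1_expr (pt5 q p t a e))
         * inverse (eval_expr Atot_expr (pt5 q p t a e) - eval_expr A1_expr (pt5 q p t a e)))"
    by (simp add: RC_expr_def eval_chord2_expr sinc_half_expr_def S_def)
  ultimately show ?thesis
    by (simp add: RC_def A2_def divide_inverse)
qed

section \<open>Derivatives at the base point\<close>

definition base_point :: "real^5" where
  "base_point = pt5 (1/2) (1/2) 0 0 0"

lemma sinc_coeff_values [simp]:
  "sinc_coeff 0 = 1" "sinc_coeff (Suc 0) = 0" "sinc_coeff (Suc (Suc 0)) = -1/6"
  by (simp_all add: sinc_coeff_def sin_coeff_def fact_numeral)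

lemma sin_rem_coeff_values [simp]:
  "sin_rem_coeff 0 = 1/6" "sin_rem_coeff (Suc 0) = 0" "sin_rem_coeff (Suc (Suc 0)) = -1/120"
  by (simp_all add: sin_rem_coeff_def sin_coeff_def fact_numeral)

lemma power_series_at_0 [simp]: "power_series c 0 = c 0"
  by (simp add: power_series_def)

lemmas RC_expr_defs = RC_expr_def A1_expr_def integral_y_expr_def Atot_expr_def sinc_half_expr_def
  chord2_expr_def y_expr_def ESub_def base_point_def

lemma defined_RC_expr_base: "defined_at RC_expr base_point"
  by (simp add: RC_expr_defs entire_coeffs_sinc_coeff entire_coeffs_sin_rem_coeff)

lemma RC_expr_derivatives_at_base:
  "eval_expr (partial_expr RC_expr 1) base_point = 0"
  "eval_expr (partial_expr RC_expr 2) base_point = 0"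
  "eval_expr (partial_expr RC_expr 3) base_point = 0"
  "eval_expr (partial_expr (partial_expr RC_expr 1) 1) base_point = 48"
  "eval_expr (partial_expr (partial_expr RC_expr 2) 1) base_point = -16"
  "eval_expr (partial_expr (partial_expr RC_expr 3) 1) base_point = 4/3"
  "eval_expr (partial_expr (partial_expr RC_expr 1) 2) base_point = -16"
  "eval_expr (partial_expr (partial_expr RC_expr 2) 2) base_point = 48"
  "eval_expr (partial_expr (partial_expr RC_expr 3) 2) base_point = 4/3"
  "eval_expr (partial_expr (partial_expr RC_expr 1) 3) base_point = 4/3"
  "eval_expr (partial_expr (partial_expr RC_expr 2) 3) base_point = 4/3"
  "eval_expr (partial_expr (partial_expr RC_expr 3) 3) base_point = 7/9"
  "eval_expr (partial_expr (partial_expr RC_expr 1) 4) base_point = -8"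
  "eval_expr (partial_expr (partial_expr RC_expr 2) 4) base_point = 8"
  "eval_expr (partial_expr (partial_expr RC_expr 3) 4) base_point = -2/3"
  using defined_RC_expr_base
  by (simp_all only: eval_partial_partial_by_jet2 eval_partial_by_jet2)
    (simp_all add: RC_expr_defs diffs_def real_sqrt_divide power_divide)

section \<open>Slices of the quotient at fixed \<open>(a, \<epsilon>)\<close>\<close>

definition idx5 :: "3 \<Rightarrow> 5" where
  "idx5 j = (if j = 1 then 1 else if j = 2 then 2 else 3)"

lemma idx5_simps [simp]: "idx5 1 = 1" "idx5 2 = 2" "idx5 3 = 3"
  by (simp_all add: idx5_def)

lemma base_point_eq_emb5: "base_point = emb5 base3 0 0"
  by (simp add: base_point_def emb5_def base3_def)

definition slice_gradient :: "real \<Rightarrow> real^3 \<Rightarrow> real^3" where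
  "slice_gradient a z = (\<chi> j. eval_expr (partial_expr RC_expr (idx5 j)) (emb5 z a 0))"

definition slice_hessian :: "real^5 \<Rightarrow> real^3^3" where
  "slice_hessian x = (\<chi> i j. eval_expr (partial_expr (partial_expr RC_expr (idx5 j)) (idx5 i)) x)"

definition Hess0 :: "real^3^3" where
  "Hess0 = vector [vector [48, -16, 4/3], vector [-16, 48, 4/3], vector [4/3, 4/3, 7/9]]"

lemma expr_derivative_emb5:
  "expr_derivative e x (emb5 h b c) = (\<Sum>j\<in>UNIV. h $ j * eval_expr (partial_expr e (idx5 j)) x)
     + b * eval_expr (partial_expr e 4) x + c * eval_expr (partial_expr e 5) x"
  by (simp add: expr_derivative_def sum_5 sum_3)

lemma has_derivative_slice:
  assumes "defined_at RC_expr (emb5 z a 0)"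
  shows "((\<lambda>w. eval_expr RC_expr (emb5 w a 0)) has_derivative (\<lambda>h. slice_gradient a z \<bullet> h)) (at z)"
  using has_derivative_eval_expr_compose[OF assms has_derivative_emb5]
  by (simp add: expr_derivative_emb5 slice_gradient_def inner_vec_def mult.commute)

lemma has_real_derivative_slice_gradient:
  assumes "defined_at RC_expr (emb5 (z + t *\<^sub>R u) a 0)"
  shows "((\<lambda>s. slice_gradient a (z + s *\<^sub>R u) \<bullet> u) has_real_derivative
            u \<bullet> (slice_hessian (emb5 (z + t *\<^sub>R u) a 0) *v u)) (at t)"
proof -
  have line: "emb5 (z + s *\<^sub>R u) a 0 = emb5 z a 0 + s *\<^sub>R emb5 u 0 0" for s
    using emb5_add_scaleR[of z s u a 0 0 0] by simp
  have "((\<lambda>s. \<Sum>j\<in>UNIV. u $ j * eval_expr (partial_expr RC_expr (idx5 j)) (emb5 z a 0 + s *\<^sub>R emb5 u 0 0))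
      has_real_derivative
        (\<Sum>j\<in>UNIV. u $ j * expr_derivative (partial_expr RC_expr (idx5 j)) (emb5 (z + t *\<^sub>R u) a 0) (emb5 u 0 0)))
      (at t)"
    using assms defined_at_partial unfolding line
    by (intro DERIV_sum DERIV_cmult has_real_derivative_eval_expr_line) auto
  then show ?thesis
    unfolding line[symmetric]
    by (simp add: slice_gradient_def slice_hessian_def inner_vec_def matrix_vector_mult_def
        expr_derivative_emb5 sum_3 algebra_simps)
qed

lemma slice_gradient_base: "slice_gradient 0 base3 = 0"
  using RC_expr_derivatives_at_base
  by (simp add: vec_eq_iff forall_3 slice_gradient_def base_point_eq_emb5)

lemma slice_hessian_base: "slice_hessian base_point = Hess0"
  using RC_expr_derivatives_at_base
  by (simp add: vec_eq_iff forall_3 slice_hessian_def Hess0_def)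

lemma Hess0_quadratic_form_ge: "1/2 * (norm u)^2 \<le> u \<bullet> (Hess0 *v u)"
proof -
  have "u \<bullet> (Hess0 *v u) - 1/2 * (norm u)^2
     = 95/2 * (u$1 - 32/95 * u$2 + 8/285 * u$3)^2 + 8001/190 * (u$2 + 8/189 * u$3)^2
       + 187/1134 * (u$3)^2"
    unfolding power2_norm_eq_inner
    by (simp add: Hess0_def inner_vec_def matrix_vector_mult_def sum_3
        power2_eq_square algebra_simps)
  also have "\<dots> \<ge> 0" by simp
  finally show ?thesis by simp
qed

lemma Hess3_slice:
  assumes "0 < R" "\<forall>z\<in>ball base3 R. defined_at RC_expr (emb5 z 0 0)"
  shows "Hess3 (\<lambda>z. eval_expr RC_expr (emb5 z 0 0)) base3 = slice_hessian base_point"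
proof -
  have dd_slice: "dd (\<lambda>z. eval_expr RC_expr (emb5 z 0 0)) (axis j 1) z
      = eval_expr (partial_expr RC_expr (idx5 j)) (emb5 z 0 0)" if "z \<in> ball base3 R" for z j
  proof -
    have "defined_at RC_expr (emb5 z 0 0)" using assms(2) that by blast
    from frechet_derivative_at[OF has_derivative_slice[OF this], symmetric]
    show ?thesis by (simp add: dd_def inner_axis slice_gradient_def)
  qed
  have dd_slice_derivative: "((\<lambda>z. dd (\<lambda>z. eval_expr RC_expr (emb5 z 0 0)) (axis j 1) z) has_derivative
      (\<lambda>h. expr_derivative (partial_expr RC_expr (idx5 j)) base_point (emb5 h 0 0))) (at base3)" for j
  proof (rule has_derivative_transform_within_open[OF _ open_ball[of base3 R]])
    show "((\<lambda>z. eval_expr (partial_expr RC_expr (idx5 j)) (emb5 z 0 0)) has_derivative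
        (\<lambda>h. expr_derivative (partial_expr RC_expr (idx5 j)) base_point (emb5 h 0 0))) (at base3)"
      using has_derivative_eval_expr_compose[OF _ has_derivative_emb5]
        defined_at_partial[OF defined_RC_expr_base] unfolding base_point_eq_emb5 by blast
  qed (use assms(1) dd_slice in auto)
  show ?thesis
    unfolding Hess3_def dd_def[of "\<lambda>z. dd _ _ z"] frechet_derivative_at[OF dd_slice_derivative, symmetric]
    by (simp add: vec_eq_iff forall_3 slice_hessian_def expr_derivative_emb5 sum_3 axis_def)
qed

definition shift3 :: "real^3" where
  "shift3 = vector [1/12, -1/6, 1]"

text \<open>\<open>shift3\<close> solves the linearised critical-point equation \<open>Hess0 shift3 + \<partial>\<^sub>a \<nabla> = 0\<close>.\<close>
lemma shift3_linearized_critical: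
  "expr_derivative (partial_expr RC_expr (idx5 j)) base_point (emb5 shift3 1 0) = 0"
  using RC_expr_derivatives_at_base exhaust_3[of j]
  by (auto simp: expr_derivative_emb5 sum_3 shift3_def)

lemma norm_shift3_le: "norm shift3 \<le> 2"
proof -
  have "norm shift3 \<le> (\<Sum>i\<in>UNIV. \<bar>shift3 $ i\<bar>)" by (rule norm_le_l1_cart)
  also have "\<dots> = 5/4" by (simp add: sum_3 shift3_def)
  finally show ?thesis by simp
qed

definition taylor_bound :: "3 \<Rightarrow> real" where
  "taylor_bound j =
     \<bar>second_derivative_along (partial_expr RC_expr (idx5 j)) base_point (emb5 shift3 1 0)\<bar> + 1"

text \<open>The integral formula for \<open>A1\<close> needs \<open>p \<ge> 0\<close>.\<close>
definition RC_domain :: "(real^5) set" where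
  "RC_domain = {x. defined_at RC_expr x \<and> 0 < x $ 2}"

lemma open_RC_domain: "open RC_domain"
  unfolding RC_domain_def Collect_conj_eq
  by (intro open_Int open_defined_at open_Collect_less continuous_intros)

lemma base_point_in_RC_domain: "base_point \<in> RC_domain"
  using defined_RC_expr_base by (simp add: RC_domain_def base_point_def)

definition near_base :: "real^5 \<Rightarrow> bool" where
  "near_base x \<longleftrightarrow> x \<in> RC_domain \<and>
     (\<forall>i j. \<bar>slice_hessian x $ i $ j - Hess0 $ i $ j\<bar> \<le> 1/50) \<and>
     (\<forall>j. \<bar>second_derivative_along (partial_expr RC_expr (idx5 j)) x (emb5 shift3 1 0)\<bar>
            \<le> taylor_bound j)"

lemma eventually_near_base: "eventually near_base (nhds base_point)"
proof -
  have defined: "defined_at (partial_expr RC_expr (idx5 j)) base_point"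
    "defined_at (partial_expr (partial_expr RC_expr (idx5 j)) (idx5 i)) base_point" for i j
    using defined_RC_expr_base by (auto intro: defined_at_partial)
  have "eventually (\<lambda>x. \<bar>slice_hessian x $ i $ j - Hess0 $ i $ j\<bar> \<le> 1/50) (nhds base_point)" for i j
    using eventually_dist_eval_expr_less[OF defined(2)[of j i], of "1/50"]
    unfolding slice_hessian_base[symmetric] by (auto simp: slice_hessian_def elim: eventually_mono)
  moreover have "eventually (\<lambda>x. \<bar>second_derivative_along (partial_expr RC_expr (idx5 j)) x
      (emb5 shift3 1 0)\<bar> \<le> taylor_bound j) (nhds base_point)" for j
  proof -
    let ?f = "\<lambda>x. second_derivative_along (partial_expr RC_expr (idx5 j)) x (emb5 shift3 1 0)"
    have "(?f \<longlongrightarrow> ?f base_point) (nhds base_point)"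
      using isCont_second_derivative_along[OF defined(1)[where j=j], of "emb5 shift3 1 0"]
      unfolding isCont_def by (rule tendsto_at_iff_tendsto_nhds[THEN iffD1])
    from tendstoD[OF this zero_less_one] show ?thesis
      by (auto simp: taylor_bound_def dist_real_def elim!: eventually_mono)
  qed
  ultimately show ?thesis
    unfolding near_base_def eventually_all_finite
    by (intro eventually_conj eventually_nhds_in_open open_RC_domain base_point_in_RC_domain)
      (auto simp: eventually_all_finite)
qed

lemma near_base_radius:
  obtains R where "0 < R" "\<And>z a. z \<in> ball base3 R \<Longrightarrow> \<bar>a\<bar> < R \<Longrightarrow> near_base (emb5 z a 0)"
proof -
  obtain \<rho> where "0 < \<rho>" and \<rho>: "\<And>x. dist x base_point < \<rho> \<Longrightarrow> near_base x"
    using eventually_near_base unfolding eventually_nhds_metric by blast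
  show ?thesis
  proof
    show "0 < \<rho> / 4" using \<open>0 < \<rho>\<close> by simp
    fix z a assume "z \<in> ball base3 (\<rho> / 4)" "\<bar>a\<bar> < \<rho> / 4"
    then have "norm (emb5 (z - base3) a 0) < \<rho>"
      using norm_emb5_le[of "z - base3" a 0] by (simp add: dist_norm norm_minus_commute)
    then show "near_base (emb5 z a 0)"
      by (intro \<rho>) (simp add: dist_norm base_point_eq_emb5 emb5_diff)
  qed
qed

lemma slice_strongly_convex:
  assumes "\<And>z. z \<in> ball base3 R \<Longrightarrow> near_base (emb5 z a 0)"
  shows "strongly_convex_on_ball (\<lambda>z. eval_expr RC_expr (emb5 z a 0)) (slice_gradient a) base3 R (2/5)"
proof
  fix z assume "z \<in> ball base3 R"
  then show "((\<lambda>z. eval_expr RC_expr (emb5 z a 0)) has_derivative (\<lambda>h. slice_gradient a z \<bullet> h)) (at z)"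
    using assms by (intro has_derivative_slice) (simp add: near_base_def RC_domain_def)
next
  fix z u t assume "z + t *\<^sub>R u \<in> ball base3 R"
  then have near: "near_base (emb5 (z + t *\<^sub>R u) a 0)" by (rule assms)
  have "2/5 * (norm u)^2 \<le> u \<bullet> (Hess0 *v u) - 1/50 * CARD(3) * (norm u)^2"
    using Hess0_quadratic_form_ge[of u] zero_le_power2[of "norm u"] by (simp; linarith)
  also have "\<dots> \<le> u \<bullet> (slice_hessian (emb5 (z + t *\<^sub>R u) a 0) *v u)"
    using near unfolding near_base_def by (intro quadratic_form_perturbation) blast
  finally show "\<exists>Q. ((\<lambda>s. slice_gradient a (z + s *\<^sub>R u) \<bullet> u) has_real_derivative Q) (at t)
      \<and> 2/5 * (norm u)^2 \<le> Q"
    using near has_real_derivative_slice_gradient unfolding near_base_def RC_domain_def by blast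
qed simp

lemma slice_critical_iff:
  assumes "defined_at RC_expr (emb5 z a 0)"
  shows "((\<lambda>w. eval_expr RC_expr (emb5 w a 0)) has_derivative (\<lambda>_. 0)) (at z) \<longleftrightarrow>
    slice_gradient a z = 0"
proof
  assume "((\<lambda>w. eval_expr RC_expr (emb5 w a 0)) has_derivative (\<lambda>_. 0)) (at z)"
  from has_derivative_unique[OF has_derivative_slice[OF assms] this]
  have "slice_gradient a z \<bullet> slice_gradient a z = 0" by metis
  then show "slice_gradient a z = 0" by simp
qed (use has_derivative_slice[OF assms] in simp)

lemma slice_local_min:
  assumes "\<And>z. z \<in> ball base3 R \<Longrightarrow> near_base (emb5 z 0 0)" "z \<in> ball base3 R"
  shows "eval_expr RC_expr (emb5 base3 0 0) \<le> eval_expr RC_expr (emb5 z 0 0)"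
proof -
  interpret strongly_convex_on_ball "\<lambda>z. eval_expr RC_expr (emb5 z 0 0)" "slice_gradient 0" base3 R "2/5"
    using assms(1) by (rule slice_strongly_convex)
  have "0 < R" using assms(2) by (metis mem_ball zero_le_dist order_le_less_trans)
  then have "eval_expr RC_expr (emb5 base3 0 0) + 1/5 * (norm (z - base3))^2
      \<le> eval_expr RC_expr (emb5 z 0 0)"
    using quadratic_lower_bound[OF assms(2), of base3] slice_gradient_base by simp
  then show ?thesis
    using zero_le_power2[of "norm (z - base3)"] by linarith
qed

lemma slice_gradient_shift_bound:
  assumes radius: "\<And>z a. z \<in> ball base3 R \<Longrightarrow> \<bar>a\<bar> < R \<Longrightarrow> near_base (emb5 z a 0)"
    and a: "\<bar>a\<bar> < R / 2"
  shows "norm (slice_gradient a (base3 + a *\<^sub>R shift3)) \<le> (\<Sum>j\<in>UNIV. taylor_bound j) / 2 * a^2"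
proof -
  have line: "base_point + s *\<^sub>R emb5 shift3 1 0 = emb5 (base3 + s *\<^sub>R shift3) s 0" for s
    using emb5_add_scaleR[of base3 s shift3 0 1 0 0] by (simp add: base_point_eq_emb5)
  have near: "near_base (base_point + s *\<^sub>R emb5 shift3 1 0)" if "\<bar>s\<bar> \<le> \<bar>a\<bar>" for s
  proof -
    have "norm (s *\<^sub>R shift3) \<le> \<bar>a\<bar> * 2"
      using that norm_shift3_le by (simp add: mult_mono)
    then show ?thesis
      unfolding line using a that by (intro radius) (auto simp: dist_norm)
  qed
  have component: "\<bar>slice_gradient a (base3 + a *\<^sub>R shift3) $ j\<bar> \<le> taylor_bound j / 2 * a^2" for j
    unfolding slice_gradient_def vec_lambda_beta line[symmetric]
  proof (rule taylor2_eval_expr_line)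
    fix s :: real assume "\<bar>s\<bar> \<le> \<bar>a\<bar>"
    with near show "defined_at (partial_expr RC_expr (idx5 j)) (base_point + s *\<^sub>R emb5 shift3 1 0)
      \<and> \<bar>second_derivative_along (partial_expr RC_expr (idx5 j)) (base_point + s *\<^sub>R emb5 shift3 1 0)
           (emb5 shift3 1 0)\<bar> \<le> taylor_bound j"
      by (auto simp: near_base_def RC_domain_def intro: defined_at_partial)
  next
    show "eval_expr (partial_expr RC_expr (idx5 j)) base_point = 0"
      using RC_expr_derivatives_at_base exhaust_3[of j] by auto
  qed (rule shift3_linearized_critical)
  have "norm (slice_gradient a (base3 + a *\<^sub>R shift3))
      \<le> (\<Sum>j\<in>UNIV. \<bar>slice_gradient a (base3 + a *\<^sub>R shift3) $ j\<bar>)"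
    by (rule norm_le_l1_cart)
  also have "\<dots> \<le> (\<Sum>j\<in>UNIV. taylor_bound j / 2 * a^2)"
    by (intro sum_mono component)
  finally show ?thesis
    by (simp add: sum_distrib_right sum_divide_distrib)
qed

lemma slice_critical_point_estimate:
  assumes radius: "\<And>z a. z \<in> ball base3 R \<Longrightarrow> \<bar>a\<bar> < R \<Longrightarrow> near_base (emb5 z a 0)"
    and a: "\<bar>a\<bar> < R / 2" and z: "z \<in> ball base3 R" "slice_gradient a z = 0"
  shows "norm (z - base3 - a *\<^sub>R shift3) \<le> 5/4 * (\<Sum>j\<in>UNIV. taylor_bound j) * a^2"
proof -
  interpret strongly_convex_on_ball "\<lambda>z. eval_expr RC_expr (emb5 z a 0)" "slice_gradient a" base3 R "2/5"
    using radius a by (intro slice_strongly_convex) auto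
  have "norm (a *\<^sub>R shift3) \<le> \<bar>a\<bar> * 2"
    using norm_shift3_le by (simp add: mult_left_mono)
  then have "base3 + a *\<^sub>R shift3 \<in> ball base3 R"
    using a by (simp add: dist_norm)
  from critical_point_dist_le[OF z(1) this z(2)] slice_gradient_shift_bound[OF radius a]
  have "2/5 * norm (z - base3 - a *\<^sub>R shift3) \<le> (\<Sum>j\<in>UNIV. taylor_bound j) / 2 * a^2"
    by (simp add: algebra_simps)
  then show ?thesis by simp
qed

lemma slice_critical_point_exists_unique:
  assumes radius: "\<And>z a. z \<in> ball base3 R \<Longrightarrow> \<bar>a\<bar> < R \<Longrightarrow> near_base (emb5 z a 0)"
    and a: "\<bar>a\<bar> < R" and small: "norm (slice_gradient a base3) < R / 10"
  shows "\<exists>!z. z \<in> ball base3 (R / 2) \<and> slice_gradient a z = 0"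
proof -
  interpret strongly_convex_on_ball "\<lambda>z. eval_expr RC_expr (emb5 z a 0)" "slice_gradient a" base3 R "2/5"
    using radius a by (intro slice_strongly_convex) auto
  have R: "0 < R" using a by linarith
  have "norm (slice_gradient a base3) * (R / 2) < 2/5 / 2 * (R / 2)^2"
    using small R by (simp add: power2_eq_square)
  then obtain z where "z \<in> ball base3 (R / 2)" "slice_gradient a z = 0"
    using critical_point_exists[of "R / 2"] R by auto
  moreover have "w = z" if "w \<in> ball base3 (R / 2)" "slice_gradient a w = 0" for w
    using critical_point_unique that calculation R by auto
  ultimately show ?thesis by blast
qed

lemma slice_gradient_small:
  assumes "0 < \<eta>"
  obtains \<delta> where "0 < \<delta>" "\<And>a. \<bar>a\<bar> < \<delta> \<Longrightarrow> norm (slice_gradient a base3) < \<eta>"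
proof -
  have "eventually (\<lambda>x. \<bar>eval_expr (partial_expr RC_expr (idx5 j)) x\<bar> < \<eta> / 3) (nhds base_point)" for j
    using eventually_dist_eval_expr_less[OF defined_at_partial[OF defined_RC_expr_base], of "\<eta> / 3" "idx5 j"]
      slice_gradient_base assms
    by (simp add: vec_eq_iff slice_gradient_def base_point_eq_emb5)
  then have "eventually (\<lambda>x. \<forall>j. \<bar>eval_expr (partial_expr RC_expr (idx5 j)) x\<bar> < \<eta> / 3) (nhds base_point)"
    by (simp add: eventually_all_finite)
  then obtain \<delta> where "0 < \<delta>"
    and \<delta>: "\<And>x. dist x base_point < \<delta> \<Longrightarrow> \<forall>j. \<bar>eval_expr (partial_expr RC_expr (idx5 j)) x\<bar> < \<eta> / 3"
    unfolding eventually_nhds_metric by blast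
  show ?thesis
  proof (rule that[OF \<open>0 < \<delta>\<close>])
    fix a :: real assume "\<bar>a\<bar> < \<delta>"
    then have "dist (emb5 base3 a 0) base_point < \<delta>"
      using norm_emb5_le[of 0 a 0] by (simp add: dist_norm base_point_eq_emb5 emb5_diff)
    then have component: "\<bar>slice_gradient a base3 $ j\<bar> < \<eta> / 3" for j
      using \<delta> by (simp add: slice_gradient_def)
    have "(\<Sum>j\<in>UNIV. \<bar>slice_gradient a base3 $ j\<bar>) < \<eta>"
      unfolding sum_3 using component[of 1] component[of 2] component[of 3] by linarith
    then show "norm (slice_gradient a base3) < \<eta>"
      using norm_le_l1_cart[of "slice_gradient a base3"] by linarith
  qed
qed

lemma slice_critical_points:
  "\<exists>\<delta>>0. \<exists>r>0. \<exists>C. \<forall>a. \<bar>a\<bar> < \<delta> \<longrightarrow>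
     (\<forall>z \<in> ball base3 r. emb5 z a 0 \<in> RC_domain) \<and>
     (\<exists>!z. z \<in> ball base3 r \<and> ((\<lambda>w. eval_expr RC_expr (emb5 w a 0)) has_derivative (\<lambda>_. 0)) (at z)) \<and>
     (\<forall>z \<in> ball base3 r. ((\<lambda>w. eval_expr RC_expr (emb5 w a 0)) has_derivative (\<lambda>_. 0)) (at z) \<longrightarrow>
        norm (z - base3 - a *\<^sub>R vector [1/12, -1/6, 1]) \<le> C * a^2)"
proof -
  obtain R where R: "0 < R"
    and radius: "\<And>z a. z \<in> ball base3 R \<Longrightarrow> \<bar>a\<bar> < R \<Longrightarrow> near_base (emb5 z a 0)"
    using near_base_radius by blast
  obtain \<delta> where \<delta>: "0 < \<delta>" "\<And>a. \<bar>a\<bar> < \<delta> \<Longrightarrow> norm (slice_gradient a base3) < R / 10"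
    using slice_gradient_small[of "R / 10"] R by auto
  have in_R: "z \<in> ball base3 R" if "z \<in> ball base3 (R / 2)" for z
    using that R by auto
  have domain: "emb5 z a 0 \<in> RC_domain" if "z \<in> ball base3 R" "\<bar>a\<bar> < R" for z a
    using radius[OF that] by (simp add: near_base_def)
  have critical_iff: "((\<lambda>w. eval_expr RC_expr (emb5 w a 0)) has_derivative (\<lambda>_. 0)) (at z)
      \<longleftrightarrow> slice_gradient a z = 0" if "z \<in> ball base3 R" "\<bar>a\<bar> < R" for z a
    using domain[OF that] by (intro slice_critical_iff) (simp add: RC_domain_def)
  show ?thesis
  proof (intro exI conjI allI impI ballI)
    show "0 < min \<delta> (R / 2)" "0 < R / 2" using \<delta> R by auto
    fix a :: real assume a: "\<bar>a\<bar> < min \<delta> (R / 2)"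
    then have aR: "\<bar>a\<bar> < R" using R by linarith
    show "emb5 z a 0 \<in> RC_domain" if "z \<in> ball base3 (R / 2)" for z
      using domain[OF in_R[OF that] aR] .
    have "z \<in> ball base3 (R / 2) \<and> ((\<lambda>w. eval_expr RC_expr (emb5 w a 0)) has_derivative (\<lambda>_. 0)) (at z)
        \<longleftrightarrow> z \<in> ball base3 (R / 2) \<and> slice_gradient a z = 0" for z
      using critical_iff[OF in_R aR] by blast
    then show "\<exists>!z. z \<in> ball base3 (R / 2) \<and> ((\<lambda>w. eval_expr RC_expr (emb5 w a 0)) has_derivative (\<lambda>_. 0)) (at z)"
      using slice_critical_point_exists_unique[OF radius aR \<delta>(2)] a by simp
    show "norm (z - base3 - a *\<^sub>R vector [1/12, -1/6, 1]) \<le> 5/4 * (\<Sum>j\<in>UNIV. taylor_bound j) * a^2"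
      if "z \<in> ball base3 (R / 2)" "((\<lambda>w. eval_expr RC_expr (emb5 w a 0)) has_derivative (\<lambda>_. 0)) (at z)" for z
      using slice_critical_point_estimate[OF radius _ in_R[OF that(1)]] critical_iff in_R that a
      unfolding shift3_def by auto
  qed
qed

theorem mainTheorem6:
  shows "\<exists>U (F :: real^5 \<Rightarrow> real).
    open U \<and> pt5 (1/2) (1/2) 0 0 0 \<in> U \<and> smooth_on U F \<and>
    (\<forall>q p \<theta> a e. pt5 q p \<theta> a e \<in> U \<and> \<theta> \<noteq> 0 \<longrightarrow> F (pt5 q p \<theta> a e) = RC p q \<theta> a e) \<and>
    (\<exists>r>0. \<forall>z \<in> ball base3 r. emb5 z 0 0 \<in> U \<and> F (emb5 base3 0 0) \<le> F (emb5 z 0 0)) \<and>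
    Hess3 (\<lambda>z. F (emb5 z 0 0)) base3 =
      vector [vector [48, -16, 4/3], vector [-16, 48, 4/3], vector [4/3, 4/3, 7/9]] \<and>
    (\<exists>\<delta>>0. \<exists>r>0. \<exists>C. \<forall>a. \<bar>a\<bar> < \<delta> \<longrightarrow>
       (\<forall>z \<in> ball base3 r. emb5 z a 0 \<in> U) \<and>
       (\<exists>!z. z \<in> ball base3 r \<and> ((\<lambda>w. F (emb5 w a 0)) has_derivative (\<lambda>_. 0)) (at z)) \<and>
       (\<forall>z \<in> ball base3 r. ((\<lambda>w. F (emb5 w a 0)) has_derivative (\<lambda>_. 0)) (at z) \<longrightarrow>
          norm (z - base3 - a *\<^sub>R vector [1/12, -1/6, 1]) \<le> C * a^2))"
proof (intro exI[of _ RC_domain] exI[of _ "eval_expr RC_expr"] conjI)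
  obtain R where R: "0 < R"
    and radius: "\<And>z a. z \<in> ball base3 R \<Longrightarrow> \<bar>a\<bar> < R \<Longrightarrow> near_base (emb5 z a 0)"
    using near_base_radius by blast
  have near0: "near_base (emb5 z 0 0)" if "z \<in> ball base3 R" for z
    using radius[OF that] R by simp
  show "open RC_domain" by (rule open_RC_domain)
  show "pt5 (1/2) (1/2) 0 0 0 \<in> RC_domain"
    using base_point_in_RC_domain by (simp add: base_point_def)
  show "smooth_on RC_domain (eval_expr RC_expr)"
    unfolding smooth_on_def by (intro allI Ck_on_eval_expr[OF open_RC_domain]) (auto simp: RC_domain_def)
  show "\<forall>q p \<theta> a e. pt5 q p \<theta> a e \<in> RC_domain \<and> \<theta> \<noteq> 0 \<longrightarrow> eval_expr RC_expr (pt5 q p \<theta> a e) = RC p q \<theta> a e"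
    by (auto simp: RC_domain_def intro!: eval_RC_expr)
  show "\<exists>r>0. \<forall>z \<in> ball base3 r. emb5 z 0 0 \<in> RC_domain \<and>
      eval_expr RC_expr (emb5 base3 0 0) \<le> eval_expr RC_expr (emb5 z 0 0)"
    using R near0 slice_local_min[OF near0] by (auto simp: near_base_def)
  show "Hess3 (\<lambda>z. eval_expr RC_expr (emb5 z 0 0)) base3 =
      vector [vector [48, -16, 4/3], vector [-16, 48, 4/3], vector [4/3, 4/3, 7/9]]"
    using Hess3_slice[OF R] near0 slice_hessian_base
    by (auto simp: Hess0_def near_base_def RC_domain_def)
qed (rule slice_critical_points)

end
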